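(* Let $\mathscr X=[0,1]^d$ with the Euclidean norm $\|\cdot\|_2$, and let $\beta\in(0,\infty)$. For $\mathbf x\in\mathscr X$ and a finite set $\mathbf X_n\subset\mathscr X$ define $D_\beta(\mathbf x,\mathbf X_n,\mathscr X)=\min\{\min_{\mathbf x_i\in\mathbf X_n}\|\mathbf x-\mathbf x_i\|_2,\ \beta\,d(\mathbf x,\partial\mathscr X)\}$, where $d(\mathbf x,\partial\mathscr X)$ is the Euclidean distance from $\mathbf x$ to the boundary of $\mathscr X$. Let $\mathbf x_1\in\mathscr X$ and, for $n\ge1$, let $\mathbf x_{n+1}\in\mathrm{Arg}\max_{\mathbf x\in\mathscr X}D_\beta(\mathbf x,\mathbf X_n,\mathscr X)$ where $\mathbf X_n=\{\mathbf x_1,\ldots,\mathbf x_n\}$. Then for every $n\ge1$, $$\min_{1\le i\le n}\|\mathbf x_{n+1}-\mathbf x_i\|_2\ge a\,\mathsf{CR}(\mathbf X_n),\qquad a=\frac1{1+\sqrt d/\beta};$$ that is, this boundary-phobic algorithm is an instance of the relaxed greedy packing algorithm (in which $\mathbf x_{n+1}\in\mathscr X$ is any point with $\min_i\|\mathbf x_{n+1}-\mathbf x_i\|\ge\alpha_n\mathsf{CR}(\mathbf X_n)$) with $\alpha_n=a=1/(1+\sqrt d/\beta)$ for all $n$.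
   Context: Fill distance $\mathsf{CR}(\mathbf X_n)=\sup_{\mathbf x\in\mathscr X}\min_{i\le n}\|\mathbf x-\mathbf x_i\|_2$. *)

theory Defs
  imports "HOL-Analysis.Analysis"
begin

text \<open>The unit cube [0,1]^d, with d = CARD('d).\<close>
definition unit_cube :: "(real ^ 'd) set" where
  "unit_cube = {x. \<forall>i. 0 \<le> x $ i \<and> x $ i \<le> 1}"

definition min_dist :: "real ^ 'd \<Rightarrow> (real ^ 'd) set \<Rightarrow> real" where
  "min_dist x P = Min ((\<lambda>p. dist x p) ` P)"

definition D_beta :: "real \<Rightarrow> real ^ 'd \<Rightarrow> (real ^ 'd) set \<Rightarrow> real" where
  "D_beta \<beta> x P = min (min_dist x P) (\<beta> * infdist x (frontier (unit_cube :: (real ^ 'd) set)))"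

definition covering_radius :: "(real ^ 'd) set \<Rightarrow> real" where
  "covering_radius P = (SUP x\<in>(unit_cube :: (real ^ 'd) set). min_dist x P)"

end

theory Submission
  imports Defs
begin

text \<open>
  Let \<open>\<delta>\<close> be the maximal value of \<open>D_beta\<close>, attained at the new point \<open>x\<close>, and \<open>r = \<delta> / \<beta>\<close>.
  Every cube point whose distance to the boundary exceeds \<open>r\<close> has \<open>D_beta \<le> \<delta>\<close>, hence lies
  within \<open>\<delta>\<close> of the design. These points are dense in the inner cube \<open>[r, 1 - r]^d\<close>, and every
  point of \<open>[0, 1]^d\<close> is within \<open>r \<surd>d\<close> of that inner cube. So the covering radius is at most
  \<open>\<delta> + r \<surd>d = \<delta> (1 + \<surd>d / \<beta>)\<close>, while \<open>\<delta>\<close> is at most the distance from \<open>x\<close> to the design.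
\<close>

lemma dist_le_sqrt_card_if_components_close:
  fixes x y :: "real ^ 'd::finite"
  assumes "\<And>i. \<bar>x $ i - y $ i\<bar> \<le> r"
  shows "dist x y \<le> r * sqrt CARD('d)"
proof -
  have "infnorm (x - y) \<le> r"
    unfolding infnorm_cart using assms by (intro cSup_least) auto
  have "dist x y \<le> sqrt CARD('d) * infnorm (x - y)"
    using norm_le_infnorm[of "x - y"] by (simp add: dist_norm)
  also have "\<dots> \<le> sqrt CARD('d) * r"
    using \<open>infnorm (x - y) \<le> r\<close> by (intro mult_left_mono) auto
  finally show ?thesis
    by (simp add: mult.commute)
qed

lemma unit_cube_eq_cbox: "(unit_cube :: (real ^ 'd::finite) set) = cbox 0 1"
  unfolding unit_cube_def by (auto simp: mem_box_cart)

lemma min_dist_eq_infdist: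
  assumes "finite P" "P \<noteq> {}"
  shows "min_dist x P = infdist x P"
  using assms by (simp add: min_dist_def infdist_notempty cInf_eq_Min)

lemma infdist_frontier_unit_cube_le:
  fixes x :: "real ^ 'd::finite"
  assumes "x \<in> unit_cube"
  shows "infdist x (frontier unit_cube) \<le> x $ i" "infdist x (frontier unit_cube) \<le> 1 - x $ i"
    and "infdist x (frontier unit_cube) \<le> 1/2"
proof -
  have "infdist x (frontier unit_cube) \<le> \<bar>x $ i - c\<bar>" if "c = 0 \<or> c = 1" for c
  proof -
    define p where "p = x + (c - x $ i) *\<^sub>R axis i 1"
    have "p \<in> frontier unit_cube"
      using assms that unfolding unit_cube_eq_cbox frontier_cbox p_def
      by (auto simp: mem_box_cart axis_def)
    moreover have "dist x p = \<bar>x $ i - c\<bar>"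
      by (simp add: p_def dist_norm)
    ultimately show ?thesis by (metis infdist_le)
  qed
  from this[of 0] this[of 1] assms show
    "infdist x (frontier unit_cube) \<le> x $ i" "infdist x (frontier unit_cube) \<le> 1 - x $ i"
    and "infdist x (frontier unit_cube) \<le> 1/2"
    by (auto simp: unit_cube_def)
qed

lemma infdist_frontier_unit_cube_ge:
  fixes x :: "real ^ 'd::finite"
  assumes "\<And>i. r \<le> x $ i \<and> x $ i \<le> 1 - r"
  shows "r \<le> infdist x (frontier unit_cube)"
proof -
  have "0 \<in> frontier (unit_cube :: (real ^ 'd) set)"
    unfolding unit_cube_eq_cbox frontier_cbox by (auto simp: mem_box_cart)
  then have nonempty: "frontier (unit_cube :: (real ^ 'd) set) \<noteq> {}"
    by auto
  have "r \<le> dist x p" if "p \<in> frontier unit_cube" for p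
  proof -
    from that obtain i where "p $ i \<le> 0 \<or> 1 \<le> p $ i"
      unfolding unit_cube_eq_cbox frontier_cbox by (auto simp: mem_box_cart not_less)
    with assms[of i] have "r \<le> \<bar>x $ i - p $ i\<bar>" by auto
    also have "\<dots> \<le> dist x p"
      by (metis dist_real_def dist_vec_nth_le)
    finally show ?thesis .
  qed
  then show ?thesis
    unfolding infdist_notempty[OF nonempty] by (intro cINF_greatest nonempty)
qed

lemma exists_point_deep_in_unit_cube_near:
  fixes y :: "real ^ 'd::finite"
  assumes "y \<in> unit_cube" "0 \<le> r" "r \<le> 1/2"
  obtains z where "z \<in> unit_cube" "r \<le> infdist z (frontier unit_cube)"
    "dist y z \<le> r * sqrt CARD('d)"
proof
  define z :: "real ^ 'd" where "z = (\<chi> i. max r (min (1 - r) (y $ i)))"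
  have y: "0 \<le> y $ i \<and> y $ i \<le> 1" for i
    using assms(1) by (simp add: unit_cube_def)
  have z: "r \<le> z $ i \<and> z $ i \<le> 1 - r" for i
    using assms(3) by (simp add: z_def)
  show "z \<in> unit_cube"
    using z assms(2) unfolding unit_cube_def by (smt (verit) mem_Collect_eq)
  show "r \<le> infdist z (frontier unit_cube)"
    using z by (rule infdist_frontier_unit_cube_ge)
  have "\<bar>y $ i - z $ i\<bar> \<le> r" for i
    using y[of i] assms(2,3) by (auto simp: z_def)
  then show "dist y z \<le> r * sqrt CARD('d)"
    by (rule dist_le_sqrt_card_if_components_close)
qed

lemma min_dist_le_if_deep_points_close:
  fixes y :: "real ^ 'd::finite"
  assumes "finite P" "P \<noteq> {}" "y \<in> unit_cube" "0 \<le> r" "r < 1/2"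
    and deep: "\<And>z. z \<in> unit_cube \<Longrightarrow> r < infdist z (frontier unit_cube) \<Longrightarrow>
      min_dist z P \<le> c"
  shows "min_dist y P \<le> c + r * sqrt CARD('d)"
proof -
  define s where "s = sqrt CARD('d)"
  have "s > 0"
    by (simp add: s_def)
  have "(min_dist y P - c) / s \<le> w" if w: "r < w" "w < 1/2" for w
  proof -
    obtain z where z: "z \<in> unit_cube" "w \<le> infdist z (frontier unit_cube)" "dist y z \<le> w * s"
      using exists_point_deep_in_unit_cube_near[OF assms(3), of w] assms(4) w
      unfolding s_def by auto
    have "min_dist y P \<le> min_dist z P + dist y z"
      using infdist_triangle[of y P z] assms(1,2) by (simp add: min_dist_eq_infdist)
    also have "\<dots> \<le> c + w * s"
      using deep[of z] z w by simp
    finally show ?thesis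
      using \<open>s > 0\<close> by (simp add: pos_divide_le_eq)
  qed
  with assms(5) have "(min_dist y P - c) / s \<le> r"
    by (rule dense_ge_bounded)
  with \<open>s > 0\<close> show ?thesis
    by (simp add: s_def pos_divide_le_eq)
qed

lemma covering_radius_le_at_D_beta_maximum:
  fixes x :: "real ^ 'd::finite"
  assumes "\<beta> > 0" "finite P" "P \<noteq> {}" "x \<in> unit_cube"
    and maximal: "\<forall>y\<in>unit_cube. D_beta \<beta> y P \<le> D_beta \<beta> x P"
  shows "covering_radius P \<le> (1 + sqrt CARD('d) / \<beta>) * min_dist x P"
proof -
  define \<delta> where "\<delta> = D_beta \<beta> x P"
  define r where "r = \<delta> / \<beta>"
  define s where "s = sqrt CARD('d)"
  have min_dist_infdist: "min_dist y P = infdist y P" for y :: "real ^ 'd"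
    using assms(2,3) by (rule min_dist_eq_infdist)
  have "\<delta> \<le> min_dist x P" "\<delta> \<le> \<beta> * infdist x (frontier unit_cube)" "0 \<le> \<delta>"
    using assms(1) by (auto simp: \<delta>_def D_beta_def min_dist_infdist infdist_nonneg)
  then have r: "r * s \<le> min_dist x P * (s / \<beta>)" "r \<le> infdist x (frontier unit_cube)" "0 \<le> r"
    using assms(1) by (auto simp: r_def s_def field_simps intro: mult_right_mono)
  have "r \<le> 1/2"
    using r(2) infdist_frontier_unit_cube_le(3)[OF assms(4)] by simp
  have deep: "min_dist z P \<le> \<delta>" if "z \<in> unit_cube" "r < infdist z (frontier unit_cube)" for z
  proof -
    have "\<delta> < \<beta> * infdist z (frontier unit_cube)"
      using that(2) assms(1) by (simp add: r_def pos_divide_less_eq mult.commute)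
    moreover have "D_beta \<beta> z P \<le> \<delta>"
      using maximal that(1) by (simp add: \<delta>_def)
    ultimately show ?thesis
      by (auto simp: D_beta_def min_le_iff_disj)
  qed
  have "min_dist y P \<le> min_dist x P + r * s" if "y \<in> unit_cube" for y
  proof (cases "r < 1/2")
    case True
    have "min_dist y P \<le> \<delta> + r * s"
      unfolding s_def
      by (rule min_dist_le_if_deep_points_close[OF assms(2,3) \<open>y \<in> unit_cube\<close> r(3) True deep])
    with \<open>\<delta> \<le> min_dist x P\<close> show ?thesis
      by simp
  next
    case False
    \<comment> \<open>The inner cube degenerates to its centre, which must then be \<open>x\<close> itself.\<close>
    have centre: "x $ i = 1/2" for i
      using r(2) \<open>r \<le> 1/2\<close> False infdist_frontier_unit_cube_le(1,2)[OF assms(4), of i]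
      by linarith
    have "\<bar>y $ i - x $ i\<bar> \<le> r" for i
      using \<open>y \<in> unit_cube\<close> centre[of i] False \<open>r \<le> 1/2\<close>
      unfolding unit_cube_def by (auto dest: spec[of _ i])
    then have "dist y x \<le> r * s"
      unfolding s_def by (rule dist_le_sqrt_card_if_components_close)
    then show ?thesis
      using infdist_triangle[of y P x] by (simp add: min_dist_infdist)
  qed
  then have "covering_radius P \<le> min_dist x P + r * s"
    unfolding covering_radius_def using assms(4) by (intro cSUP_least) auto
  with r(1) show ?thesis
    by (simp add: s_def algebra_simps)
qed

theorem theorem7:
  fixes \<beta> :: real and xs :: "nat \<Rightarrow> real ^ 'd::finite"
  assumes beta_pos: "\<beta> > 0"
    and x1: "xs 1 \<in> unit_cube"
    and greedy: "\<And>n. n \<ge> 1 \<Longrightarrow> xs (n + 1) \<in> unit_cube \<and>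
        (\<forall>y\<in>unit_cube. D_beta \<beta> y (xs ` {1..n}) \<le> D_beta \<beta> (xs (n + 1)) (xs ` {1..n}))"
  shows "\<forall>n\<ge>1. min_dist (xs (n + 1)) (xs ` {1..n})
           \<ge> (1 / (1 + sqrt (real CARD('d)) / \<beta>)) * covering_radius (xs ` {1..n})"
proof (intro allI impI)
  fix n :: nat
  assume "n \<ge> 1"
  define a where "a = 1 + sqrt (real CARD('d)) / \<beta>"
  have "a > 0"
    using beta_pos by (simp add: a_def add_pos_nonneg)
  have "covering_radius (xs ` {1..n}) \<le> a * min_dist (xs (n + 1)) (xs ` {1..n})"
    unfolding a_def using beta_pos greedy[OF \<open>n \<ge> 1\<close>] \<open>n \<ge> 1\<close>
    by (intro covering_radius_le_at_D_beta_maximum) auto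
  with \<open>a > 0\<close> show "min_dist (xs (n + 1)) (xs ` {1..n})
           \<ge> (1 / (1 + sqrt (real CARD('d)) / \<beta>)) * covering_radius (xs ` {1..n})"
    unfolding a_def[symmetric] by (simp add: field_simps)
qed

end
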